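(* For every weighted graph $G=(V,w)$, $\mathrm{cdim}(G)\le\widetilde{\mathrm{cdim}}(G)$.
   Context: An $n$-vertex weighted graph $G=(V,w)$ is given by $w\in\mathbb{R}_{\ge0}^{\binom n2}$. The edge set is $E=\{e: w(e)>0\}$, $m=|E|$. For $\emptyset\neq X\subsetneq V$, the cut $\Delta(X)$ is the set of edges of $E$ with exactly one endpoint in $X$, and $S_X\in\{0,1\}^{\binom n2}$ is the indicator of all pairs with exactly one endpoint in $X$; cut weight is $\langle S_X,w\rangle$ and $c^*$ is the minimum cut weight. $\mathcal{M}(G)$ is the set of minimum-weight cuts; $\chi(S)\in\{0,1\}^m$ is the characteristic vector of $S\subseteq E$ indexed by $E$; $\mathrm{cdim}(G)=\dim\,\mathrm{span}\{\chi(S):S\in\mathcal{M}(G)\}$. For $Y\in\mathbb{R}^{M\times N}$, $w\in\mathbb{R}^N$, $c\in\mathbb{R}^M$, the $(w,c)$ one-sided row-by-row $\ell_1$-approximate rank of $Y$ is the minimum rank of $\tilde Y$ with $\tilde Y\le Y$ entrywise and $\sum_j|w(j)(Y(i,j)-\tilde Y(i,j))|\le c(i)$ for all $i$. With $M_G$ the $(2^{n-1}-1)\times\binom n2$ matrix whose rows are the $S_X$ over all unordered bipartitions $\{X,V\setminus X\}$ into nonempty parts, and $c=M_Gw-c^*\mathbf{1}$, $\widetilde{\mathrm{cdim}}(G)$ is the $(w,c)$ one-sided row-by-row $\ell_1$-approximate rank of $M_G$. *)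

theory Defs
  imports "HOL-Analysis.Analysis"
begin

(* Vertex set V = UNIV of a finite type 'v.  Unordered pairs of distinct vertices
   are represented as 2-element sets; weights w are functions on 'v::finite set, of which
   only the values on pairs matter.  Vectors in R^(n choose 2) (resp. R^E) are
   represented as elements of real^('v::finite set) that vanish outside the pairs (resp. E). *)

definition pairs :: "'v::finite set set" where
  "pairs = {e. \<exists>a b. a \<noteq> b \<and> e = {a, b}}"

definition edges :: "('v::finite set \<Rightarrow> real) \<Rightarrow> 'v::finite set set" where
  "edges w = {e \<in> pairs. w e > 0}"

definition proper_side :: "'v::finite set \<Rightarrow> bool" where
  "proper_side X \<longleftrightarrow> X \<noteq> {} \<and> X \<noteq> UNIV"

definition cut_edges :: "('v::finite set \<Rightarrow> real) \<Rightarrow> 'v::finite set \<Rightarrow> 'v::finite set set" where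
  "cut_edges w X = {e \<in> edges w. card (e \<inter> X) = 1}"

definition S_vec :: "'v::finite set \<Rightarrow> real ^ ('v::finite set)" where
  "S_vec X = (\<chi> e. if e \<in> pairs \<and> card (e \<inter> X) = 1 then 1 else 0)"

definition cut_weight :: "('v::finite set \<Rightarrow> real) \<Rightarrow> 'v::finite set \<Rightarrow> real" where
  "cut_weight w X = (\<Sum>e\<in>pairs. S_vec X $ e * w e)"

definition min_cut_value :: "('v::finite set \<Rightarrow> real) \<Rightarrow> real" where
  "min_cut_value w = Min (cut_weight w ` {X. proper_side X})"

definition min_cuts :: "('v::finite set \<Rightarrow> real) \<Rightarrow> 'v::finite set set set" where
  "min_cuts w = {cut_edges w X | X. proper_side X \<and> cut_weight w X = min_cut_value w}"

definition char_vec :: "'v::finite set set \<Rightarrow> real ^ ('v::finite set)" where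
  "char_vec S = (\<chi> e. if e \<in> S then 1 else 0)"

definition cdim :: "('v::finite set \<Rightarrow> real) \<Rightarrow> nat" where
  "cdim w = dim (char_vec ` min_cuts w)"

definition bipartitions :: "'v::finite set set set" where
  "bipartitions = {{X, - X} | X. proper_side X}"

definition MG :: "'v::finite set set \<Rightarrow> 'v::finite set \<Rightarrow> real" where
  "MG B e = S_vec (SOME X. X \<in> B) $ e"

definition mat_rank :: "'v::finite set set set \<Rightarrow> ('v::finite set set \<Rightarrow> 'v::finite set \<Rightarrow> real) \<Rightarrow> nat" where
  "mat_rank R Y = dim ((\<lambda>i. \<chi> j. if j \<in> pairs then Y i j else 0) ` R)"

definition approx_rank ::
  "'v::finite set set set \<Rightarrow> ('v::finite set set \<Rightarrow> 'v::finite set \<Rightarrow> real) \<Rightarrow> ('v::finite set \<Rightarrow> real)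
     \<Rightarrow> ('v::finite set set \<Rightarrow> real) \<Rightarrow> nat" where
  "approx_rank R Y w c = (LEAST r. \<exists>Y'. r = mat_rank R Y' \<and>
      (\<forall>i\<in>R. \<forall>j\<in>pairs. Y' i j \<le> Y i j) \<and>
      (\<forall>i\<in>R. (\<Sum>j\<in>pairs. \<bar>w j * (Y i j - Y' i j)\<bar>) \<le> c i))"

definition cdim_tilde :: "('v::finite set \<Rightarrow> real) \<Rightarrow> nat" where
  "cdim_tilde w = approx_rank bipartitions MG w
      (\<lambda>B. (\<Sum>e\<in>pairs. MG B e * w e) - min_cut_value w)"

end

theory Submission
  imports Defs
begin

text \<open>Let \<open>Y'\<close> be feasible for the approximate rank. For a minimum cut \<open>X\<close> the budget
  \<open>c\<close> of the row \<open>{X, -X}\<close> is \<open>0\<close>, so \<open>Y'\<close> agrees with \<open>S\<^sub>X\<close> on every pair of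
  nonzero weight, in particular on every edge. Projecting the rows of \<open>Y'\<close> onto the
  coordinates in \<open>E\<close> therefore produces every \<open>\<chi>(\<Delta>(X))\<close> with \<open>\<Delta>(X)\<close> a minimum cut, and a
  linear projection does not increase dimension.\<close>

lemma card_Int_compl_eq_1_iff:
  assumes "e \<in> pairs"
  shows "card (e \<inter> - X) = 1 \<longleftrightarrow> card (e \<inter> X) = 1"
proof -
  obtain a b where "a \<noteq> b" "e = {a, b}" using assms unfolding pairs_def by blast
  then show ?thesis
    by (cases "a \<in> X"; cases "b \<in> X") (auto simp: Int_insert_left)
qed

lemma S_vec_compl: "S_vec (- X) = S_vec X"
  unfolding S_vec_def vec_eq_iff using card_Int_compl_eq_1_iff by auto

lemma MG_bipartition: "MG {X, - X} e = S_vec X $ e"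
proof -
  have "(SOME Y. Y \<in> {X, - X}) \<in> {X, - X}" by (rule someI[of _ X]) simp
  then show ?thesis unfolding MG_def by (auto simp: S_vec_compl)
qed

lemma MG_row_weight: "(\<Sum>e\<in>pairs. MG {X, - X} e * w e) = cut_weight w X"
  by (simp add: MG_bipartition cut_weight_def)

lemma min_cut_value_le:
  assumes "proper_side X"
  shows "min_cut_value w \<le> cut_weight w X"
  unfolding min_cut_value_def using assms by (intro Min_le) auto

lemma le_approx_rank:
  assumes "\<forall>i\<in>R. \<forall>j\<in>pairs. Y0 i j \<le> Y i j"
    and "\<forall>i\<in>R. (\<Sum>j\<in>pairs. \<bar>w j * (Y i j - Y0 i j)\<bar>) \<le> c i"
    and "\<And>Y'. \<forall>i\<in>R. \<forall>j\<in>pairs. Y' i j \<le> Y i j \<Longrightarrow>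
           \<forall>i\<in>R. (\<Sum>j\<in>pairs. \<bar>w j * (Y i j - Y' i j)\<bar>) \<le> c i \<Longrightarrow> k \<le> mat_rank R Y'"
  shows "k \<le> approx_rank R Y w c"
proof -
  let ?feasible = "\<lambda>r. \<exists>Y'. r = mat_rank R Y' \<and> (\<forall>i\<in>R. \<forall>j\<in>pairs. Y' i j \<le> Y i j) \<and>
      (\<forall>i\<in>R. (\<Sum>j\<in>pairs. \<bar>w j * (Y i j - Y' i j)\<bar>) \<le> c i)"
  have "?feasible (mat_rank R Y0)" using assms(1,2) by blast
  then have "?feasible (Least ?feasible)" by (rule LeastI)
  then show ?thesis unfolding approx_rank_def using assms(3) by auto
qed

lemma weighted_l1_le_0_imp_eq:
  fixes y y' w :: "'a \<Rightarrow> real"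
  assumes "finite A" "(\<Sum>j\<in>A. \<bar>w j * (y j - y' j)\<bar>) \<le> 0" "j \<in> A" "w j \<noteq> 0"
  shows "y' j = y j"
proof -
  have "(\<Sum>j\<in>A. \<bar>w j * (y j - y' j)\<bar>) = 0"
    using assms(2) by (smt (verit) abs_ge_zero sum_nonneg)
  then have "\<bar>w j * (y j - y' j)\<bar> = 0"
    using assms(1,3) by (subst (asm) sum_nonneg_eq_0_iff) auto
  then show ?thesis using assms(4) by simp
qed

definition restrict_to_edges :: "('v::finite set \<Rightarrow> real) \<Rightarrow> real ^ 'v set \<Rightarrow> real ^ 'v set" where
  "restrict_to_edges w v = (\<chi> e. if e \<in> edges w then v $ e else 0)"

lemma linear_restrict_to_edges: "linear (restrict_to_edges w)"
  unfolding restrict_to_edges_def by (rule linearI) (auto simp: vec_eq_iff)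

lemma char_vec_min_cut_in_restricted_rows:
  fixes w :: "'v::finite set \<Rightarrow> real"
  assumes "\<forall>i\<in>bipartitions. (\<Sum>j\<in>pairs. \<bar>w j * (MG i j - Y' i j)\<bar>)
             \<le> (\<Sum>e\<in>pairs. MG i e * w e) - min_cut_value w"
    and "S \<in> min_cuts w"
  shows "char_vec S \<in> restrict_to_edges w `
           (\<lambda>i. \<chi> j. if j \<in> pairs then Y' i j else 0) ` bipartitions"
proof -
  obtain X where X: "proper_side X" "cut_weight w X = min_cut_value w"
    and S: "S = cut_edges w X"
    using assms(2) unfolding min_cuts_def by blast
  let ?B = "{X, - X}"
  have B: "?B \<in> bipartitions" unfolding bipartitions_def using X(1) by blast
  have "(\<Sum>j\<in>pairs. \<bar>w j * (MG ?B j - Y' ?B j)\<bar>) \<le> 0"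
    using assms(1) B X(2) by (force simp: MG_row_weight)
  then have agree: "Y' ?B e = MG ?B e" if "e \<in> edges w" for e
    using that by (intro weighted_l1_le_0_imp_eq[of pairs]) (auto simp: edges_def)
  have "char_vec S = restrict_to_edges w (\<chi> j. if j \<in> pairs then Y' ?B j else 0)"
    by (auto simp: vec_eq_iff restrict_to_edges_def char_vec_def S cut_edges_def agree
        MG_bipartition S_vec_def edges_def)
  then show ?thesis using B by blast
qed

theorem lemma5:
  fixes w :: "'v::finite set \<Rightarrow> real"
  assumes "\<forall>e\<in>pairs. w e \<ge> 0"
  shows "cdim w \<le> cdim_tilde w"
  unfolding cdim_tilde_def
proof (rule le_approx_rank[where Y0 = MG])
  show "\<forall>i\<in>bipartitions. (\<Sum>j\<in>pairs. \<bar>w j * (MG i j - MG i j)\<bar>)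
          \<le> (\<Sum>e\<in>pairs. MG i e * w e) - min_cut_value w"
    by (auto simp: bipartitions_def MG_row_weight min_cut_value_le)
next
  fix Y' assume "\<forall>i\<in>bipartitions. (\<Sum>j\<in>pairs. \<bar>w j * (MG i j - Y' i j)\<bar>)
                   \<le> (\<Sum>e\<in>pairs. MG i e * w e) - min_cut_value w"
  then have "char_vec ` min_cuts w \<subseteq>
      restrict_to_edges w ` (\<lambda>i. \<chi> j. if j \<in> pairs then Y' i j else 0) ` bipartitions"
    using char_vec_min_cut_in_restricted_rows by blast
  then have "cdim w \<le> dim (restrict_to_edges w `
      (\<lambda>i. \<chi> j. if j \<in> pairs then Y' i j else 0) ` bipartitions)"
    unfolding cdim_def by (rule dim_subset)
  also have "\<dots> \<le> mat_rank bipartitions Y'"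
    unfolding mat_rank_def by (rule dim_image_le[OF linear_restrict_to_edges])
  finally show "cdim w \<le> mat_rank bipartitions Y'" .
qed auto

end
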